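(* Let $T=4$ and let $P$ be a probability distribution on pairs of binary sequences $(A,B)=(A_{1:4},B_{1:4})\in\{0,1\}^4\times\{0,1\}^4$ belonging to the class $\mathcal P_0$ of non-causal models, i.e. there exist a (possibly infinite) hidden attribute space, a probability distribution $P(R_A,R_B\mid E)$ over pairs of hidden attributes $(R_A,R_B)$, and conditional distributions such that $$P(A_{1:4},B_{1:4}\mid E)=\sum_{R_A,R_B}P(R_A,R_B\mid E)\,P(A_1\mid R_A)\,P(B_1\mid R_B)\prod_{t=2}^{4}P(A_t\mid A_{t-1},R_A)\,P(B_t\mid B_{t-1},R_B),$$ where the transitions are stationary: $P(A_t\mid A_{t-1},R_A)=P(A_{t'}\mid A_{t'-1},R_A)$ and $P(B_t\mid B_{t-1},R_B)=P(B_{t'}\mid B_{t'-1},R_B)$ for all $t,t'$ (the sum over hidden attributes being understood as an integral against a probability measure when the attribute space is infinite). Define $$c^{(1)}(A,B)=\Big(\mathbf 1\{A_2=B_2\neq A_3=B_3\}-\mathbf 1\{A_2=B_3\neq A_3=B_2\}\Big)\Big(1-\mathbf 1\{A_1\neq A_4\}\,\mathbf 1\{B_1\neq B_4\}\Big).$$ Then $\langle c^{(1)}(A,B)\rangle_P:=\sum_{A,B\in\{0,1\}^4}P(A,B\mid E)\,c^{(1)}(A,B)=0$.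
   Context: Here $A_t$ and $B_t$ denote the binary actions of two individuals (Alice and Bob) at time $t$, $E$ denotes the presence of a directed social-network edge from Alice to Bob, and $R_A,R_B$ are unobserved attributes of Alice and Bob whose joint distribution given $E$ is arbitrary. In a non-causal model, Bob's action at time $t$ depends only on his previous action and his hidden attribute (not on Alice's previous action), so $(A,B)$ is a mixture, over the hidden attributes, of products of two independent stationary (time-homogeneous) Markov chains on $\{0,1\}$. $\mathbf 1\{\cdot\}$ denotes the indicator function, and a chained condition such as $A_2=B_2\neq A_3=B_3$ means $A_2=B_2$, $A_3=B_3$ and $A_2\neq A_3$. *)

theory Defs
  imports "HOL-Probability.Probability"
begin

text \<open>Binary sequences of length 4 are lists of booleans of length 4;
  the time-t entry (t = 1..4) is xs ! (t - 1).\<close>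
definition seqs4 :: "bool list set" where
  "seqs4 = {xs. length xs = 4}"

definition is_init_dist :: "(bool \<Rightarrow> real) \<Rightarrow> bool" where
  "is_init_dist p \<longleftrightarrow> (\<forall>x. 0 \<le> p x) \<and> p False + p True = 1"

definition is_trans_kernel :: "(bool \<Rightarrow> bool \<Rightarrow> real) \<Rightarrow> bool" where
  "is_trans_kernel q \<longleftrightarrow> (\<forall>x y. 0 \<le> q x y) \<and> (\<forall>x. q x False + q x True = 1)"

definition markov4 :: "(bool \<Rightarrow> real) \<Rightarrow> (bool \<Rightarrow> bool \<Rightarrow> real) \<Rightarrow> bool list \<Rightarrow> real" where
  "markov4 p q xs = p (xs ! 0) * (\<Prod>t\<in>{2..4::nat}. q (xs ! (t - 2)) (xs ! (t - 1)))"

definition nc_prob ::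
  "('r \<times> 's) measure \<Rightarrow> ('r \<Rightarrow> bool \<Rightarrow> real) \<Rightarrow> ('r \<Rightarrow> bool \<Rightarrow> bool \<Rightarrow> real)
     \<Rightarrow> ('s \<Rightarrow> bool \<Rightarrow> real) \<Rightarrow> ('s \<Rightarrow> bool \<Rightarrow> bool \<Rightarrow> real) \<Rightarrow> bool list \<Rightarrow> bool list \<Rightarrow> real" where
  "nc_prob M pA qA pB qB a b =
     (LINT r|M. markov4 (pA (fst r)) (qA (fst r)) a * markov4 (pB (snd r)) (qB (snd r)) b)"

definition ind :: "bool \<Rightarrow> real" where
  "ind P = (if P then 1 else 0)"

text \<open>The function c^(1)(A,B), with A_t = a ! (t-1), B_t = b ! (t-1).\<close>
definition c1 :: "bool list \<Rightarrow> bool list \<Rightarrow> real" where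
  "c1 a b =
     (ind (a!1 = b!1 \<and> a!2 = b!2 \<and> a!1 \<noteq> a!2)
      - ind (a!1 = b!2 \<and> a!2 = b!1 \<and> a!1 \<noteq> a!2))
     * (1 - ind (a!0 \<noteq> a!3) * ind (b!0 \<noteq> b!3))"

end

theory Submission
  imports Defs
begin

text \<open>Let \<open>jump A\<close> be \<open>1\<close> if \<open>A\<^sub>2 = 1, A\<^sub>3 = 0\<close>, \<open>-1\<close> if \<open>A\<^sub>2 = 0, A\<^sub>3 = 1\<close>, and \<open>0\<close>
  otherwise, and \<open>open_jump A = jump A * 1{A\<^sub>1 \<noteq> A\<^sub>4}\<close>. Then
  \<open>c1 A B = jump A * jump B - open_jump A * open_jump B\<close>, so given the hidden attributes,
  under which A and B are independent chains, the expectation of \<open>c1\<close> vanishes as soon as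
  \<open>E[jump A] = E[open_jump A]\<close> for a single stationary chain. Their difference is
  \<open>E[jump A * 1{A\<^sub>1 = A\<^sub>4}]\<close>, which is zero because the paths \<open>x y z x\<close> and \<open>x z y x\<close>
  are equally likely: on two states, a loop has the same transition product in both
  directions.\<close>

lemma markov4_Cons4: "markov4 p q [x1, x2, x3, x4] = p x1 * q x1 x2 * q x2 x3 * q x3 x4"
  unfolding markov4_def by (simp add: numeral_eq_Suc atLeastAtMostSuc_conv)

lemma seqs4_eq_image:
  "seqs4 = (\<lambda>(x1, x2, x3, x4). [x1, x2, x3, x4]) ` (UNIV \<times> UNIV \<times> UNIV \<times> UNIV)"
proof (rule set_eqI, rule iffI)
  fix xs :: "bool list"
  assume "xs \<in> seqs4"
  then have "xs = [xs!0, xs!1, xs!2, xs!3]"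
    by (auto simp: seqs4_def numeral_eq_Suc length_Suc_conv)
  then show "xs \<in> (\<lambda>(x1, x2, x3, x4). [x1, x2, x3, x4]) ` (UNIV \<times> UNIV \<times> UNIV \<times> UNIV)"
    by (intro image_eqI[where x = "(xs!0, xs!1, xs!2, xs!3)"]) auto
qed (auto simp: seqs4_def)

lemma sum_seqs4:
  "sum f seqs4 = (\<Sum>x1\<in>UNIV. \<Sum>x2\<in>UNIV. \<Sum>x3\<in>UNIV. \<Sum>x4\<in>UNIV. f [x1, x2, x3, x4])"
proof -
  have inj: "inj_on (\<lambda>(x1::bool, x2::bool, x3::bool, x4::bool). [x1, x2, x3, x4])
      (UNIV \<times> UNIV \<times> UNIV \<times> UNIV)"
    by (auto simp: inj_on_def)
  show ?thesis
    unfolding seqs4_eq_image sum.reindex[OF inj] o_def sum.cartesian_product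
    by (simp only: case_prod_unfold)
qed

lemma bool_loop_reversal:
  fixes q :: "bool \<Rightarrow> bool \<Rightarrow> 'a::comm_semiring_1"
  shows "q x y * q y z * q z x = q x z * q z y * q y x"
  by (cases x; cases y; cases z) (simp_all add: ac_simps)

definition jump :: "bool list \<Rightarrow> real" where
  "jump a = ind (a!1 \<and> \<not> a!2) - ind (\<not> a!1 \<and> a!2)"

definition open_jump :: "bool list \<Rightarrow> real" where
  "open_jump a = jump a * ind (a!0 \<noteq> a!3)"

lemma c1_eq_jump: "c1 a b = jump a * jump b - open_jump a * open_jump b"
  unfolding c1_def jump_def open_jump_def ind_def
  by (cases "a!0"; cases "a!1"; cases "a!2"; cases "a!3";
      cases "b!0"; cases "b!1"; cases "b!2"; cases "b!3"; simp)

lemma markov4_loop_reversal: "markov4 p q [x, y, z, x] = markov4 p q [x, z, y, x]"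
  unfolding markov4_Cons4 using bool_loop_reversal[of q x y z] by (simp add: ac_simps)

lemma sum_markov4_jump_eq_open_jump:
  "(\<Sum>a\<in>seqs4. markov4 p q a * jump a) = (\<Sum>a\<in>seqs4. markov4 p q a * open_jump a)"
  unfolding sum_seqs4
  by (simp add: jump_def open_jump_def ind_def UNIV_bool markov4_loop_reversal[of p q _ True False])

lemma sum_product_c1:
  "(\<Sum>a\<in>seqs4. \<Sum>b\<in>seqs4. f a * g b * c1 a b)
     = (\<Sum>a\<in>seqs4. f a * jump a) * (\<Sum>b\<in>seqs4. g b * jump b)
       - (\<Sum>a\<in>seqs4. f a * open_jump a) * (\<Sum>b\<in>seqs4. g b * open_jump b)"
  unfolding c1_eq_jump sum_product sum_subtractf[symmetric]
  by (intro sum.cong refl) (simp add: algebra_simps)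

lemma sum_markov4_product_c1:
  "(\<Sum>a\<in>seqs4. \<Sum>b\<in>seqs4. markov4 p q a * markov4 p' q' b * c1 a b) = 0"
  unfolding sum_product_c1 sum_markov4_jump_eq_open_jump by simp

lemma markov4_bounds:
  assumes "is_init_dist p" "is_trans_kernel q"
  shows "0 \<le> markov4 p q xs \<and> markov4 p q xs \<le> 1"
proof -
  have "0 \<le> p x \<and> p x \<le> 1" for x
  proof -
    have "0 \<le> p False" "0 \<le> p True" "p False + p True = 1"
      using assms(1) unfolding is_init_dist_def by auto
    then show ?thesis by (cases x) simp_all
  qed
  moreover have "0 \<le> q x y \<and> q x y \<le> 1" for x y
  proof -
    have "0 \<le> q x False" "0 \<le> q x True" "q x False + q x True = 1"
      using assms(2) unfolding is_trans_kernel_def by auto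
    then show ?thesis by (cases y) simp_all
  qed
  ultimately show ?thesis
    unfolding markov4_def by (auto intro!: mult_le_one prod_nonneg prod_le_1 mult_nonneg_nonneg)
qed

theorem mainTheorem1:
  fixes M :: "('r \<times> 's) measure"
    and pA :: "'r \<Rightarrow> bool \<Rightarrow> real" and qA :: "'r \<Rightarrow> bool \<Rightarrow> bool \<Rightarrow> real"
    and pB :: "'s \<Rightarrow> bool \<Rightarrow> real" and qB :: "'s \<Rightarrow> bool \<Rightarrow> bool \<Rightarrow> real"
    and P :: "bool list \<Rightarrow> bool list \<Rightarrow> real"
  assumes "prob_space M"
    and "\<And>ra. is_init_dist (pA ra)" and "\<And>ra. is_trans_kernel (qA ra)"
    and "\<And>rb. is_init_dist (pB rb)" and "\<And>rb. is_trans_kernel (qB rb)"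
    and "\<And>x. (\<lambda>r. pA (fst r) x) \<in> borel_measurable M"
    and "\<And>x y. (\<lambda>r. qA (fst r) x y) \<in> borel_measurable M"
    and "\<And>x. (\<lambda>r. pB (snd r) x) \<in> borel_measurable M"
    and "\<And>x y. (\<lambda>r. qB (snd r) x y) \<in> borel_measurable M"
    and "\<And>a b. a \<in> seqs4 \<Longrightarrow> b \<in> seqs4 \<Longrightarrow> P a b = nc_prob M pA qA pB qB a b"
  shows "(\<Sum>a\<in>seqs4. \<Sum>b\<in>seqs4. P a b * c1 a b) = 0"
proof -
  interpret prob_space M by fact
  let ?f = "\<lambda>a b r. markov4 (pA (fst r)) (qA (fst r)) a * markov4 (pB (snd r)) (qB (snd r)) b"
  have integrable: "integrable M (\<lambda>r. ?f a b r * c)" for a b c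
  proof (intro integrable_mult_left integrable_const_bound[where B = 1])
    show "AE r in M. norm (?f a b r) \<le> 1"
      using markov4_bounds[OF assms(2,3)] markov4_bounds[OF assms(4,5)]
      by (auto intro!: mult_le_one simp: abs_mult)
    show "?f a b \<in> borel_measurable M"
      unfolding markov4_def using assms(6-9) by measurable
  qed
  have "(\<Sum>a\<in>seqs4. \<Sum>b\<in>seqs4. P a b * c1 a b)
      = (\<Sum>a\<in>seqs4. \<Sum>b\<in>seqs4. (LINT r|M. ?f a b r * c1 a b))"
    using assms(10) by (simp add: nc_prob_def)
  also have "\<dots> = (\<Sum>a\<in>seqs4. (LINT r|M. (\<Sum>b\<in>seqs4. ?f a b r * c1 a b)))"
    by (intro sum.cong refl Bochner_Integration.integral_sum[symmetric] integrable)
  also have "\<dots> = (LINT r|M. (\<Sum>a\<in>seqs4. \<Sum>b\<in>seqs4. ?f a b r * c1 a b))"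
    by (intro Bochner_Integration.integral_sum[symmetric] Bochner_Integration.integrable_sum integrable)
  also have "\<dots> = 0"
    using sum_markov4_product_c1 by (simp add: mult.assoc)
  finally show ?thesis .
qed

end
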